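(* Let $f_1,\dots,f_n$ satisfy Assumptions A1, A2 and $f_0$ satisfy Assumption A3. Then $(\hat x,\hat\beta)\in\mathbb{R}^d\times\Delta^{n-1}$ is $(\epsilon_0,\epsilon)$-preference stationary if $\|\nabla f_{\hat\beta}(\hat x)\|_2\le\epsilon$ and, for some $x\in\mathbb{R}^d$ and $\alpha\in(0,1)$: (1) $-\nabla f_0(x)^\top\widehat{\nabla}x^*(x,\hat\beta)(\beta'-\hat\beta)\le\alpha\cdot\epsilon_0\|\beta'-\hat\beta\|_1$ for all $\beta'\in\Delta^{n-1}$; and (2) $\mathrm{err}_{\nabla f_0}(x,\hat\beta)\le(1-\alpha)\cdot\epsilon_0$.
   Context: Assumption A1: each $f_i:\mathbb{R}^d\to\mathbb{R}$ is twice differentiable with $\mu\mathbf{I}\preceq\nabla^2 f_i\preceq L\mathbf{I}$, $0<\mu\le L$, $\kappa:=L/\mu$. Assumption A2: each $\nabla^2 f_i$ is $L_H$-Lipschitz. Assumption A3: $f_0:\mathbb{R}^d\to\mathbb{R}$ has $L_0$-Lipschitz gradient. $F=(f_1,\dots,f_n)$, $\nabla F(x)\in\mathbb{R}^{n\times d}$ its Jacobian, $f_\beta=\sum_i\beta_if_i$ for $\beta\in\Delta^{n-1}$ (simplex), $x^*(\beta)=x_\beta=\operatorname{argmin}_xf_\beta(x)$, $\nabla x^*(\beta)=-\nabla^2f_\beta(x_\beta)^{-1}\nabla F(x_\beta)^\top$, $\widehat{\nabla}x^*(x,\beta):=-\nabla^2f_\beta(x)^{-1}\nabla F(x)^\top$.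 $R$ is the $\ell_2$-diameter of the Pareto set of $F$, $M_0:=\kappa R$, $M_1:=2\kappa^2R(1+L_HR/\mu)$, and $\mathrm{err}_{\nabla f_0}(x,\beta):=\frac{1}{\mu}\big(\frac{M_1}{2M_0}\|\nabla f_0(x)\|_2+L_0M_0\big)\|\nabla f_\beta(x)\|_2$. A point $(x,\beta)$ is $(\epsilon_0,\epsilon)$-preference stationary if $-\nabla f_0(x_\beta)^\top\nabla x^*(\beta)(\beta'-\beta)\le\epsilon_0\|\beta'-\beta\|_1$ for all $\beta'\in\Delta^{n-1}$ and $\|\nabla f_\beta(x)\|_2\le\epsilon$. *)

theory Defs
  imports "HOL-Analysis.Analysis"
begin

text \<open>Objectives f_i : R^d -> R are indexed by a finite type 'n (so n = CARD('n));
  R^d is real^'d.\<close>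

definition prob_simplex :: "(real^'n::finite) set" where
  "prob_simplex = {b. (\<forall>i. 0 \<le> b $ i) \<and> (\<Sum>i\<in>UNIV. b $ i) = 1}"

definition l1norm :: "real^'n::finite \<Rightarrow> real" where
  "l1norm v = (\<Sum>i\<in>UNIV. \<bar>v $ i\<bar>)"

definition assumption_A1 ::
  "('n::finite \<Rightarrow> real^'d::finite \<Rightarrow> real) \<Rightarrow> ('n \<Rightarrow> real^'d \<Rightarrow> real^'d)
   \<Rightarrow> ('n \<Rightarrow> real^'d \<Rightarrow> real^'d^'d) \<Rightarrow> real \<Rightarrow> real \<Rightarrow> bool" where
  "assumption_A1 f Df Hf \<mu> L \<longleftrightarrow>
     0 < \<mu> \<and> \<mu> \<le> L \<and>
     (\<forall>i x. (f i has_derivative (\<lambda>h. Df i x \<bullet> h)) (at x)) \<and>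
     (\<forall>i x. (Df i has_derivative (\<lambda>h. Hf i x *v h)) (at x)) \<and>
     (\<forall>i x v. \<mu> * (v \<bullet> v) \<le> v \<bullet> (Hf i x *v v) \<and> v \<bullet> (Hf i x *v v) \<le> L * (v \<bullet> v))"

definition assumption_A2 :: "('n::finite \<Rightarrow> real^'d::finite \<Rightarrow> real^'d^'d) \<Rightarrow> real \<Rightarrow> bool" where
  "assumption_A2 Hf LH \<longleftrightarrow>
     (\<forall>i x y. onorm (\<lambda>v. (Hf i x - Hf i y) *v v) \<le> LH * norm (x - y))"

definition assumption_A3 :: "(real^'d::finite \<Rightarrow> real) \<Rightarrow> (real^'d \<Rightarrow> real^'d) \<Rightarrow> real \<Rightarrow> bool" where
  "assumption_A3 f0 g0 L0 \<longleftrightarrow>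
     (\<forall>x. (f0 has_derivative (\<lambda>h. g0 x \<bullet> h)) (at x)) \<and>
     (\<forall>x y. norm (g0 x - g0 y) \<le> L0 * norm (x - y))"

definition fbeta :: "('n::finite \<Rightarrow> real^'d::finite \<Rightarrow> real) \<Rightarrow> real^'n \<Rightarrow> real^'d \<Rightarrow> real" where
  "fbeta f b x = (\<Sum>i\<in>UNIV. b $ i * f i x)"

definition gbeta :: "('n::finite \<Rightarrow> real^'d::finite \<Rightarrow> real^'d) \<Rightarrow> real^'n \<Rightarrow> real^'d \<Rightarrow> real^'d" where
  "gbeta Df b x = (\<Sum>i\<in>UNIV. b $ i *\<^sub>R Df i x)"

definition Hbeta :: "('n::finite \<Rightarrow> real^'d::finite \<Rightarrow> real^'d^'d) \<Rightarrow> real^'n \<Rightarrow> real^'d \<Rightarrow> real^'d^'d" where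
  "Hbeta Hf b x = (\<Sum>i\<in>UNIV. b $ i *\<^sub>R Hf i x)"

definition jacF :: "('n::finite \<Rightarrow> real^'d::finite \<Rightarrow> real^'d) \<Rightarrow> real^'d \<Rightarrow> real^'d^'n" where
  "jacF Df x = (\<chi> i. Df i x)"

definition xstar :: "('n::finite \<Rightarrow> real^'d::finite \<Rightarrow> real) \<Rightarrow> real^'n \<Rightarrow> real^'d" where
  "xstar f b = (THE x. \<forall>y. fbeta f b x \<le> fbeta f b y)"

definition hat_grad_xstar ::
  "('n::finite \<Rightarrow> real^'d::finite \<Rightarrow> real^'d) \<Rightarrow> ('n \<Rightarrow> real^'d \<Rightarrow> real^'d^'d)
    \<Rightarrow> real^'d \<Rightarrow> real^'n \<Rightarrow> real^'n^'d" where
  "hat_grad_xstar Df Hf x b = - (matrix_inv (Hbeta Hf b x) ** transpose (jacF Df x))"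

definition grad_xstar ::
  "('n::finite \<Rightarrow> real^'d::finite \<Rightarrow> real) \<Rightarrow> ('n \<Rightarrow> real^'d \<Rightarrow> real^'d)
    \<Rightarrow> ('n \<Rightarrow> real^'d \<Rightarrow> real^'d^'d) \<Rightarrow> real^'n \<Rightarrow> real^'n^'d" where
  "grad_xstar f Df Hf b = hat_grad_xstar Df Hf (xstar f b) b"

definition pareto_set :: "('n::finite \<Rightarrow> real^'d::finite \<Rightarrow> real) \<Rightarrow> (real^'d) set" where
  "pareto_set f = {x. \<not> (\<exists>y. (\<forall>i. f i y \<le> f i x) \<and> (\<exists>i. f i y < f i x))}"

definition Rdiam :: "('n::finite \<Rightarrow> real^'d::finite \<Rightarrow> real) \<Rightarrow> real" where
  "Rdiam f = diameter (pareto_set f)"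

definition M0 :: "('n::finite \<Rightarrow> real^'d::finite \<Rightarrow> real) \<Rightarrow> real \<Rightarrow> real \<Rightarrow> real" where
  "M0 f \<mu> L = (L / \<mu>) * Rdiam f"

definition M1 :: "('n::finite \<Rightarrow> real^'d::finite \<Rightarrow> real) \<Rightarrow> real \<Rightarrow> real \<Rightarrow> real \<Rightarrow> real" where
  "M1 f \<mu> L LH = 2 * (L / \<mu>)^2 * Rdiam f * (1 + LH * Rdiam f / \<mu>)"

definition err_grad_f0 ::
  "('n::finite \<Rightarrow> real^'d::finite \<Rightarrow> real) \<Rightarrow> ('n \<Rightarrow> real^'d \<Rightarrow> real^'d) \<Rightarrow> (real^'d \<Rightarrow> real^'d)
    \<Rightarrow> real \<Rightarrow> real \<Rightarrow> real \<Rightarrow> real \<Rightarrow> real^'d \<Rightarrow> real^'n \<Rightarrow> real" where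
  "err_grad_f0 f Df g0 \<mu> L LH L0 x b =
     (1 / \<mu>) * ((M1 f \<mu> L LH / (2 * M0 f \<mu> L)) * norm (g0 x) + L0 * M0 f \<mu> L)
       * norm (gbeta Df b x)"

definition pref_stationary ::
  "('n::finite \<Rightarrow> real^'d::finite \<Rightarrow> real) \<Rightarrow> ('n \<Rightarrow> real^'d \<Rightarrow> real^'d)
    \<Rightarrow> ('n \<Rightarrow> real^'d \<Rightarrow> real^'d^'d) \<Rightarrow> (real^'d \<Rightarrow> real^'d) \<Rightarrow> real \<Rightarrow> real
    \<Rightarrow> real^'d \<Rightarrow> real^'n \<Rightarrow> bool" where
  "pref_stationary f Df Hf g0 \<epsilon>0 \<epsilon> x b \<longleftrightarrow>
     (\<forall>b'\<in>prob_simplex. - (g0 (xstar f b) \<bullet> (grad_xstar f Df Hf b *v (b' - b))) \<le> \<epsilon>0 * l1norm (b' - b))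
     \<and> norm (gbeta Df b x) \<le> \<epsilon>"

end

theory Submission
  imports Defs
begin

(*
  Write v = b' - bhat, p = grad_xstar bhat v (the exact hypergradient direction at x*(bhat)) and
  q = hat_grad_xstar x bhat v (its estimate at x).  Every minimiser x*(b) is Pareto optimal and
  the gradient of f_i vanishes at x*(e_i), so Lipschitz continuity of the gradients bounds the
  Jacobian at x*(bhat) by L R and hence |p| <= M0 |v|_1.  Comparing the linear systems solved
  by p and q, using the Lipschitz continuity of Hessians and gradients, gives
  |p - q| <= kappa (1 + LH R / mu) |x - x*(bhat)| |v|_1, while strong convexity gives
  mu |x - x*(bhat)| <= |grad f_bhat(x)|.  With the Lipschitz continuity of grad f0 this bounds
  the difference of the two directional derivatives of f0 by err(x, bhat) |v|_1, and
  conditions (1) and (2) add up to eps0 |v|_1.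

  The Hessians are not assumed symmetric, so the Lipschitz bound on the gradients is obtained
  by co-coercivity from the quadratic lower and upper bounds rather than from an operator norm.
*)

section \<open>Smooth strongly convex functions\<close>

lemma quadratic_lower_bound_real:
  fixes \<psi> \<phi> \<phi>' :: "real \<Rightarrow> real"
  assumes d\<psi>: "\<And>t. (\<psi> has_real_derivative \<phi> t) (at t)"
    and d\<phi>: "\<And>t. (\<phi> has_real_derivative \<phi>' t) (at t)"
    and lower: "\<And>t. k \<le> \<phi>' t"
  shows "\<psi> 0 + \<phi> 0 + k / 2 \<le> \<psi> 1"
proof -
  have mono: "\<phi> 0 - k * 0 \<le> \<phi> s - k * s" if "0 \<le> s" for s
  proof (rule DERIV_nonneg_imp_nondecreasing[OF that])
    fix t
    have "((\<lambda>t. \<phi> t - k * t) has_real_derivative \<phi>' t - k) (at t)"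
      using d\<phi>[of t] by (auto intro!: derivative_eq_intros)
    then show "\<exists>y. ((\<lambda>t. \<phi> t - k * t) has_real_derivative y) (at t) \<and> 0 \<le> y"
      using lower[of t] by auto
  qed
  have "\<psi> 0 - 0 * \<phi> 0 - k * 0\<^sup>2 / 2 \<le> \<psi> 1 - 1 * \<phi> 0 - k * 1\<^sup>2 / 2"
  proof (rule DERIV_nonneg_imp_nondecreasing[of 0 1])
    fix t :: real
    assume "0 \<le> t"
    have "((\<lambda>t. \<psi> t - t * \<phi> 0 - k * t\<^sup>2 / 2) has_real_derivative \<phi> t - \<phi> 0 - k * t) (at t)"
      using d\<psi>[of t] by (auto intro!: derivative_eq_intros)
    then show "\<exists>y. ((\<lambda>t. \<psi> t - t * \<phi> 0 - k * t\<^sup>2 / 2) has_real_derivative y) (at t) \<and> 0 \<le> y"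
      using mono[OF \<open>0 \<le> t\<close>] by auto
  qed simp
  then show ?thesis by simp
qed

lemma quadratic_lower_bound_of_hessian:
  fixes F :: "'a::real_inner \<Rightarrow> real" and G :: "'a \<Rightarrow> 'a" and H :: "'a \<Rightarrow> 'a \<Rightarrow> 'a"
  assumes dF: "\<And>x. (F has_derivative (\<lambda>h. G x \<bullet> h)) (at x)"
    and dG: "\<And>x. (G has_derivative H x) (at x)"
    and lower: "\<And>x v. m * (v \<bullet> v) \<le> v \<bullet> H x v"
  shows "F c + G c \<bullet> (y - c) + m / 2 * (norm (y - c))\<^sup>2 \<le> F y"
proof -
  define u where "u = y - c"
  have line: "((\<lambda>t. c + t *\<^sub>R u) has_derivative (\<lambda>s. s *\<^sub>R u)) (at t)" for t
    by (auto intro!: derivative_eq_intros)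
  have "((\<lambda>t. F (c + t *\<^sub>R u)) has_real_derivative G (c + t *\<^sub>R u) \<bullet> u) (at t)" for t
    using has_derivative_compose[OF line dF]
    by (simp add: has_field_derivative_def mult_commute_abs)
  moreover have "((\<lambda>t. G (c + t *\<^sub>R u) \<bullet> u) has_real_derivative u \<bullet> H (c + t *\<^sub>R u) u) (at t)" for t
  proof -
    have "((\<lambda>t. G (c + t *\<^sub>R u) \<bullet> u) has_derivative (\<lambda>s. H (c + t *\<^sub>R u) (s *\<^sub>R u) \<bullet> u)) (at t)"
      by (rule has_derivative_inner_left[OF has_derivative_compose[OF line dG]])
    moreover have "linear (H (c + t *\<^sub>R u))"
      using dG has_derivative_linear by blast
    ultimately show ?thesis
      by (simp add: has_field_derivative_def linear_scale inner_commute mult_commute_abs)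
  qed
  ultimately have "F (c + 0 *\<^sub>R u) + G (c + 0 *\<^sub>R u) \<bullet> u + m * (u \<bullet> u) / 2 \<le> F (c + 1 *\<^sub>R u)"
    by (rule quadratic_lower_bound_real) (rule lower)
  then show ?thesis
    by (simp add: u_def power2_norm_eq_inner)
qed

lemma quadratic_upper_bound_of_hessian:
  fixes F :: "'a::real_inner \<Rightarrow> real" and G :: "'a \<Rightarrow> 'a" and H :: "'a \<Rightarrow> 'a \<Rightarrow> 'a"
  assumes dF: "\<And>x. (F has_derivative (\<lambda>h. G x \<bullet> h)) (at x)"
    and dG: "\<And>x. (G has_derivative H x) (at x)"
    and upper: "\<And>x v. v \<bullet> H x v \<le> M * (v \<bullet> v)"
  shows "F y \<le> F c + G c \<bullet> (y - c) + M / 2 * (norm (y - c))\<^sup>2"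
proof -
  have "- F c + (- G c) \<bullet> (y - c) + (- M) / 2 * (norm (y - c))\<^sup>2 \<le> - F y"
  proof (rule quadratic_lower_bound_of_hessian)
    show "((\<lambda>x. - F x) has_derivative (\<lambda>h. (- G x) \<bullet> h)) (at x)" for x
      using has_derivative_minus[OF dF] by simp
    show "((\<lambda>x. - G x) has_derivative (\<lambda>h. - H x h)) (at x)" for x
      using has_derivative_minus[OF dG] .
    show "(- M) * (v \<bullet> v) \<le> v \<bullet> (- H x v)" for x v
      using upper[of v x] by simp
  qed
  then show ?thesis by simp
qed

lemma gradient_cocoercive:
  fixes F :: "'a::real_inner \<Rightarrow> real" and G :: "'a \<Rightarrow> 'a"
  assumes lower: "\<And>c y. F c + G c \<bullet> (y - c) \<le> F y"
    and upper: "\<And>c y. F y \<le> F c + G c \<bullet> (y - c) + M / 2 * (norm (y - c))\<^sup>2"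
    and M: "0 < M"
  shows "(norm (G y - G x))\<^sup>2 / (2 * M) \<le> F y - F x - G x \<bullet> (y - x)"
proof -
  define g where "g = G y - G x"
  \<comment> \<open>z is a gradient step from y for F - (G x \<bullet> _), whose minimum is attained at x\<close>
  define z where "z = y - (1 / M) *\<^sub>R g"
  have "F x + G x \<bullet> (z - x) \<le> F y + G y \<bullet> (z - y) + M / 2 * (norm (z - y))\<^sup>2"
    using lower[of x z] upper[of z y] by linarith
  moreover have "G x \<bullet> (z - x) = G x \<bullet> (y - x) - (G x \<bullet> g) / M"
    by (simp add: z_def inner_diff_right)
  moreover have "G y \<bullet> (z - y) = - (G y \<bullet> g) / M"
    by (simp add: z_def)
  moreover have "M / 2 * (norm (z - y))\<^sup>2 = (norm g)\<^sup>2 / (2 * M)"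
    using M by (simp add: z_def power_divide power2_eq_square)
  moreover have "(G y \<bullet> g) / M - (G x \<bullet> g) / M = (norm g)\<^sup>2 / M"
    by (simp add: g_def inner_diff_left power2_norm_eq_inner diff_divide_distrib[symmetric])
  moreover have "(norm g)\<^sup>2 / M = 2 * ((norm g)\<^sup>2 / (2 * M))"
    by simp
  ultimately show ?thesis
    unfolding g_def[symmetric] by linarith
qed

lemma gradient_lipschitz_of_quadratic_bounds:
  fixes F :: "'a::real_inner \<Rightarrow> real" and G :: "'a \<Rightarrow> 'a"
  assumes lower: "\<And>c y. F c + G c \<bullet> (y - c) \<le> F y"
    and upper: "\<And>c y. F y \<le> F c + G c \<bullet> (y - c) + M / 2 * (norm (y - c))\<^sup>2"
    and M: "0 < M"
  shows "norm (G y - G x) \<le> M * norm (y - x)"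
proof -
  have "(norm (G y - G x))\<^sup>2 / (2 * M) \<le> F y - F x - G x \<bullet> (y - x)"
    and "(norm (G x - G y))\<^sup>2 / (2 * M) \<le> F x - F y - G y \<bullet> (x - y)"
    by (rule gradient_cocoercive[OF lower upper M])+
  then have "(norm (G y - G x))\<^sup>2 / M \<le> (G y - G x) \<bullet> (y - x)"
    using M by (simp add: norm_minus_commute inner_diff_left inner_diff_right field_simps)
  also have "\<dots> \<le> norm (G y - G x) * norm (y - x)"
    by (rule norm_cauchy_schwarz)
  finally have "norm (G y - G x) * norm (G y - G x) \<le> norm (G y - G x) * (M * norm (y - x))"
    using M by (simp add: field_simps power2_eq_square)
  then show ?thesis
    using M by (cases "G y = G x") auto
qed

lemma strongly_convex_gradient_monotone:
  fixes F :: "'a::real_inner \<Rightarrow> real" and G :: "'a \<Rightarrow> 'a"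
  assumes lower: "\<And>c y. F c + G c \<bullet> (y - c) + \<mu> / 2 * (norm (y - c))\<^sup>2 \<le> F y"
  shows "\<mu> * (norm (y - c))\<^sup>2 \<le> (G y - G c) \<bullet> (y - c)"
  using lower[of c y] lower[of y c]
  by (simp add: norm_minus_commute inner_diff_left inner_diff_right)

lemma strongly_convex_less_if_far:
  fixes F :: "'a::real_inner \<Rightarrow> real"
  assumes lower: "F c + g \<bullet> (y - c) + \<mu> / 2 * (norm (y - c))\<^sup>2 \<le> F y"
    and far: "2 * norm g / \<mu> < norm (y - c)" and \<mu>: "0 < \<mu>"
  shows "F c < F y"
proof -
  have "0 \<le> 2 * norm g / \<mu>"
    using \<mu> by simp
  then have "0 < norm (y - c)"
    using far by linarith
  moreover have "norm g < \<mu> / 2 * norm (y - c)"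
    using far \<mu> by (simp add: field_simps)
  ultimately have "norm g * norm (y - c) < \<mu> / 2 * (norm (y - c))\<^sup>2"
    by (simp add: power2_eq_square)
  moreover have "- (norm g * norm (y - c)) \<le> g \<bullet> (y - c)"
    using norm_cauchy_schwarz[of "- g" "y - c"] by simp
  ultimately show ?thesis
    using lower by linarith
qed

lemma gradient_eq_0_if_minimum:
  fixes F :: "'a::real_inner \<Rightarrow> real"
  assumes dF: "(F has_derivative (\<lambda>h. G \<bullet> h)) (at x)" and min: "\<And>y. F x \<le> F y"
  shows "G = 0"
proof -
  have "(\<lambda>h. G \<bullet> h) = (\<lambda>h. 0)"
    using differential_zero_maxmin[of x UNIV F] dF min by auto
  then have "G \<bullet> G = 0" by metis
  then show ?thesis by simp
qed

lemma strongly_convex_ex1_minimum: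
  fixes F :: "'a::euclidean_space \<Rightarrow> real" and G :: "'a \<Rightarrow> 'a"
  assumes dF: "\<And>x. (F has_derivative (\<lambda>h. G x \<bullet> h)) (at x)"
    and lower: "\<And>c y. F c + G c \<bullet> (y - c) + \<mu> / 2 * (norm (y - c))\<^sup>2 \<le> F y"
    and \<mu>: "0 < \<mu>"
  shows "\<exists>!x. \<forall>y. F x \<le> F y"
proof -
  define r where "r = 2 * norm (G 0) / \<mu>"
  have "continuous_on (cball 0 r) F"
    using dF has_derivative_continuous continuous_at_imp_continuous_on by blast
  moreover have "0 \<in> cball 0 r"
    using \<mu> by (simp add: r_def)
  ultimately obtain x where "x \<in> cball 0 r" and x: "\<And>y. y \<in> cball 0 r \<Longrightarrow> F x \<le> F y"
    using continuous_attains_inf[of "cball 0 r" F] by auto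
  have min: "F x \<le> F y" for y
  proof (cases "y \<in> cball 0 r")
    case False
    then have "F 0 < F y"
      using strongly_convex_less_if_far[OF lower[of 0 y] _ \<mu>] by (simp add: r_def)
    then show ?thesis
      using x[of 0] \<mu> by (simp add: r_def)
  qed (rule x)
  have "x' = x" if "\<forall>y. F x' \<le> F y" for x'
  proof -
    have "G x = 0"
      using gradient_eq_0_if_minimum[OF dF[of x] min] .
    then have "F x + \<mu> / 2 * (norm (x' - x))\<^sup>2 \<le> F x'"
      using lower[of x x'] by simp
    then have "\<mu> / 2 * (norm (x' - x))\<^sup>2 \<le> 0"
      using that[rule_format, of x] by linarith
    then show ?thesis
      using \<mu> by (simp add: mult_le_0_iff)
  qed
  then show ?thesis
    using min by blast
qed

section \<open>Coercive matrices\<close>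

lemma matrix_vector_mult_uminus_left: "(- A) *v x = - (A *v (x :: real^'n::finite))"
  by (simp add: matrix_vector_mult_def vec_eq_iff sum_negf)

lemma norm_matrix_vector_mult_ge:
  fixes H :: "real^'d::finite^'d"
  assumes lower: "\<And>v. \<mu> * (v \<bullet> v) \<le> v \<bullet> (H *v v)"
  shows "\<mu> * norm u \<le> norm (H *v u)"
proof (cases "u = 0")
  case False
  have "\<mu> * norm u * norm u \<le> u \<bullet> (H *v u)"
    using lower[of u] by (simp add: dot_square_norm power2_eq_square mult.assoc)
  also have "\<dots> \<le> norm (H *v u) * norm u"
    using norm_cauchy_schwarz[of u "H *v u"] by (simp add: mult.commute)
  finally show ?thesis
    using False by simp
qed simp

lemma matrix_inv_cancel_if_coercive:
  fixes H :: "real^'d::finite^'d"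
  assumes lower: "\<And>v. \<mu> * (v \<bullet> v) \<le> v \<bullet> (H *v v)" and \<mu>: "0 < \<mu>"
  shows "H *v (matrix_inv H *v w) = w"
proof -
  have "x = 0" if "H *v x = 0" for x
    using norm_matrix_vector_mult_ge[OF lower, of x] \<mu> that by (simp add: mult_le_0_iff)
  then have "invertible H"
    using invertible_left_inverse matrix_left_invertible_ker by blast
  then have "H ** matrix_inv H = mat 1"
    unfolding invertible_def matrix_inv_def by (rule someI2_ex) blast
  then show ?thesis
    by (simp add: matrix_vector_mul_assoc)
qed

lemma norm_matrix_inv_mult_le:
  fixes H :: "real^'d::finite^'d"
  assumes lower: "\<And>v. \<mu> * (v \<bullet> v) \<le> v \<bullet> (H *v v)" and \<mu>: "0 < \<mu>"
  shows "norm (matrix_inv H *v w) \<le> norm w / \<mu>"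
  using norm_matrix_vector_mult_ge[OF lower, of "matrix_inv H *v w"] \<mu>
  by (simp add: matrix_inv_cancel_if_coercive[OF lower \<mu>] field_simps)

lemma norm_matrix_inv_mult_diff_le:
  fixes H1 H2 :: "real^'d::finite^'d"
  assumes lower1: "\<And>v. \<mu> * (v \<bullet> v) \<le> v \<bullet> (H1 *v v)"
    and lower2: "\<And>v. \<mu> * (v \<bullet> v) \<le> v \<bullet> (H2 *v v)" and \<mu>: "0 < \<mu>"
  shows "\<mu> * norm (matrix_inv H1 *v w1 - matrix_inv H2 *v w2)
    \<le> norm ((H2 - H1) *v (matrix_inv H1 *v w1)) + norm (w1 - w2)"
proof -
  define p q where "p = matrix_inv H1 *v w1" and "q = matrix_inv H2 *v w2"
  have "H2 *v (p - q) = (H2 - H1) *v p + (w1 - w2)"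
    using matrix_inv_cancel_if_coercive[OF lower1 \<mu>, of w1] matrix_inv_cancel_if_coercive[OF lower2 \<mu>, of w2]
    by (simp add: p_def q_def matrix_vector_mult_diff_distrib matrix_vector_mult_diff_rdistrib)
  then have "\<mu> * norm (p - q) \<le> norm ((H2 - H1) *v p + (w1 - w2))"
    using norm_matrix_vector_mult_ge[OF lower2] by metis
  then show ?thesis
    unfolding p_def q_def using norm_triangle_ineq order_trans by blast
qed

section \<open>Scalarised objectives and their minimisers\<close>

lemma norm_sum_scaleR_le_l1norm:
  fixes a :: "'n::finite \<Rightarrow> 'a::real_normed_vector"
  assumes "\<And>i. norm (a i) \<le> B"
  shows "norm (\<Sum>i\<in>UNIV. v $ i *\<^sub>R a i) \<le> l1norm v * B"
proof -
  have "norm (\<Sum>i\<in>UNIV. v $ i *\<^sub>R a i) \<le> (\<Sum>i\<in>UNIV. \<bar>v $ i\<bar> * norm (a i))"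
    by (rule order_trans[OF norm_sum]) simp
  also have "\<dots> \<le> (\<Sum>i\<in>UNIV. \<bar>v $ i\<bar> * B)"
    by (intro sum_mono mult_left_mono assms) simp
  finally show ?thesis
    by (simp add: l1norm_def sum_distrib_right)
qed

lemma l1norm_nonneg: "0 \<le> l1norm v"
  by (simp add: l1norm_def sum_nonneg)

lemma prob_simplexD:
  assumes "b \<in> prob_simplex"
  shows "0 \<le> b $ i" and "(\<Sum>i\<in>UNIV. b $ i) = 1"
  using assms by (auto simp: prob_simplex_def)

lemma l1norm_prob_simplex: "b \<in> prob_simplex \<Longrightarrow> l1norm b = 1"
  by (simp add: l1norm_def prob_simplexD)

lemma axis_in_prob_simplex: "axis i 1 \<in> prob_simplex"
  by (auto simp: prob_simplex_def axis_def)

lemma fbeta_axis: "fbeta f (axis i 1) = f i"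
proof
  fix x
  have "fbeta f (axis i 1) x = (\<Sum>j\<in>UNIV. if j = i then f j x else 0)"
    unfolding fbeta_def axis_def by (intro sum.cong) auto
  then show "fbeta f (axis i 1) x = f i x"
    by simp
qed

lemma gbeta_axis: "gbeta Df (axis i 1) = Df i"
proof
  fix x
  have "gbeta Df (axis i 1) x = (\<Sum>j\<in>UNIV. if j = i then Df j x else 0)"
    unfolding gbeta_def axis_def by (intro sum.cong) auto
  then show "gbeta Df (axis i 1) x = Df i x"
    by simp
qed

lemma assumption_A1D:
  assumes "assumption_A1 f Df Hf \<mu> L"
  shows "0 < \<mu>" and "\<mu> \<le> L"
    and "(f i has_derivative (\<lambda>h. Df i x \<bullet> h)) (at x)"
    and "(Df i has_derivative (\<lambda>h. Hf i x *v h)) (at x)"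
    and "\<mu> * (v \<bullet> v) \<le> v \<bullet> (Hf i x *v v)"
    and "v \<bullet> (Hf i x *v v) \<le> L * (v \<bullet> v)"
  using assms by (auto simp: assumption_A1_def)

lemma assumption_A2_nonneg:
  fixes Hf :: "'n::finite \<Rightarrow> real^'d::finite \<Rightarrow> real^'d^'d"
  assumes "assumption_A2 Hf LH"
  shows "0 \<le> LH"
proof -
  have "0 \<le> onorm (\<lambda>v. (Hf i (axis k 1) - Hf i 0) *v v)"
    by (rule onorm_pos_le) (rule matrix_vector_mul_bounded_linear)
  also have "\<dots> \<le> LH * norm (axis k 1 - 0 :: real^'d)"
    using assms unfolding assumption_A2_def by blast
  finally show ?thesis
    by simp
qed

lemma assumption_A3_nonneg:
  fixes g0 :: "real^'d::finite \<Rightarrow> real^'d"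
  assumes "assumption_A3 f0 g0 L0"
  shows "0 \<le> L0"
proof -
  have "norm (g0 (axis k 1) - g0 0) \<le> L0 * norm (axis k 1 - 0 :: real^'d)"
    using assms unfolding assumption_A3_def by blast
  then have "0 \<le> L0 * norm (axis k 1 - 0 :: real^'d)"
    using norm_ge_zero order_trans by blast
  then show ?thesis
    by simp
qed

lemma matrix_vector_mult_sum_left:
  "finite S \<Longrightarrow> (\<Sum>i\<in>S. A i) *v (x :: real^'n::finite) = (\<Sum>i\<in>S. A i *v x)"
  by (induction S rule: finite_induct) (simp_all add: matrix_vector_mult_add_rdistrib)

lemma Hbeta_mult: "Hbeta Hf b x *v h = (\<Sum>i\<in>UNIV. b $ i *\<^sub>R (Hf i x *v h))"
  by (simp add: Hbeta_def matrix_vector_mult_sum_left scaleR_matrix_vector_assoc)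

lemma fbeta_has_derivative:
  assumes "\<And>i x. (f i has_derivative (\<lambda>h. Df i x \<bullet> h)) (at x)"
  shows "(fbeta f b has_derivative (\<lambda>h. gbeta Df b x \<bullet> h)) (at x)"
proof -
  have "((\<lambda>x. \<Sum>i\<in>UNIV. b $ i * f i x) has_derivative (\<lambda>h. \<Sum>i\<in>UNIV. b $ i * (Df i x \<bullet> h))) (at x)"
    by (intro has_derivative_sum has_derivative_mult_right assms)
  then show ?thesis
    by (simp add: gbeta_def fbeta_def[abs_def] inner_sum_left)
qed

lemma gbeta_has_derivative:
  assumes "\<And>i x. (Df i has_derivative (\<lambda>h. Hf i x *v h)) (at x)"
  shows "(gbeta Df b has_derivative (\<lambda>h. Hbeta Hf b x *v h)) (at x)"
proof -
  have "((\<lambda>x. \<Sum>i\<in>UNIV. b $ i *\<^sub>R Df i x) has_derivative (\<lambda>h. \<Sum>i\<in>UNIV. b $ i *\<^sub>R (Hf i x *v h))) (at x)"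
    by (intro has_derivative_sum has_derivative_scaleR_right assms)
  then show ?thesis
    by (simp add: Hbeta_mult gbeta_def[abs_def])
qed

lemma Hbeta_coercive:
  assumes A1: "assumption_A1 f Df Hf \<mu> L" and b: "b \<in> prob_simplex"
  shows "\<mu> * (v \<bullet> v) \<le> v \<bullet> (Hbeta Hf b x *v v)"
proof -
  have "\<mu> * (v \<bullet> v) = (\<Sum>i\<in>UNIV. b $ i * (\<mu> * (v \<bullet> v)))"
    by (simp add: prob_simplexD[OF b] sum_distrib_right[symmetric])
  also have "\<dots> \<le> (\<Sum>i\<in>UNIV. b $ i * (v \<bullet> (Hf i x *v v)))"
    by (intro sum_mono mult_left_mono) (simp_all add: assumption_A1D[OF A1] prob_simplexD[OF b])
  also have "\<dots> = v \<bullet> (Hbeta Hf b x *v v)"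
    by (simp add: Hbeta_mult inner_sum_right)
  finally show ?thesis .
qed

lemma fbeta_strongly_convex:
  assumes A1: "assumption_A1 f Df Hf \<mu> L" and b: "b \<in> prob_simplex"
  shows "fbeta f b c + gbeta Df b c \<bullet> (y - c) + \<mu> / 2 * (norm (y - c))\<^sup>2 \<le> fbeta f b y"
proof (rule quadratic_lower_bound_of_hessian[where H = "\<lambda>x h. Hbeta Hf b x *v h"])
  show "(fbeta f b has_derivative (\<lambda>h. gbeta Df b x \<bullet> h)) (at x)" for x
    by (rule fbeta_has_derivative) (rule assumption_A1D(3)[OF A1])
  show "(gbeta Df b has_derivative (\<lambda>h. Hbeta Hf b x *v h)) (at x)" for x
    by (rule gbeta_has_derivative) (rule assumption_A1D(4)[OF A1])
  show "\<mu> * (v \<bullet> v) \<le> v \<bullet> (Hbeta Hf b x *v v)" for x v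
    by (rule Hbeta_coercive[OF A1 b])
qed

lemma objective_strongly_convex:
  assumes "assumption_A1 f Df Hf \<mu> L"
  shows "f i c + Df i c \<bullet> (y - c) + \<mu> / 2 * (norm (y - c))\<^sup>2 \<le> f i y"
  using fbeta_strongly_convex[OF assms axis_in_prob_simplex] by (simp add: fbeta_axis gbeta_axis)

lemma objective_gradient_lipschitz:
  assumes A1: "assumption_A1 f Df Hf \<mu> L"
  shows "norm (Df i y - Df i x) \<le> L * norm (y - x)"
proof (rule gradient_lipschitz_of_quadratic_bounds[where F = "f i"])
  show "f i c + Df i c \<bullet> (y - c) \<le> f i y" for c y
  proof -
    have "0 \<le> \<mu> / 2 * (norm (y - c))\<^sup>2"
      using assumption_A1D(1)[OF A1] by simp
    then show ?thesis
      using objective_strongly_convex[OF A1, of i c y] by linarith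
  qed
  show "f i y \<le> f i c + Df i c \<bullet> (y - c) + L / 2 * (norm (y - c))\<^sup>2" for c y
    by (rule quadratic_upper_bound_of_hessian[where H = "\<lambda>x h. Hf i x *v h"])
      (rule assumption_A1D[OF A1])+
  show "0 < L"
    using assumption_A1D(1,2)[OF A1] by simp
qed

lemma fbeta_ex1_minimum:
  assumes A1: "assumption_A1 f Df Hf \<mu> L" and b: "b \<in> prob_simplex"
  shows "\<exists>!x. \<forall>y. fbeta f b x \<le> fbeta f b y"
  by (rule strongly_convex_ex1_minimum[OF fbeta_has_derivative fbeta_strongly_convex[OF A1 b]
        assumption_A1D(1)[OF A1]]) (rule assumption_A1D(3)[OF A1])

lemma xstar_minimum:
  assumes "assumption_A1 f Df Hf \<mu> L" and "b \<in> prob_simplex"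
  shows "fbeta f b (xstar f b) \<le> fbeta f b y"
  using theI'[OF fbeta_ex1_minimum[OF assms]] by (simp add: xstar_def)

lemma xstar_unique:
  assumes "assumption_A1 f Df Hf \<mu> L" and "b \<in> prob_simplex" and "\<forall>y. fbeta f b x \<le> fbeta f b y"
  shows "xstar f b = x"
  unfolding xstar_def using the1_equality[OF fbeta_ex1_minimum[OF assms(1,2)] assms(3)] .

lemma gbeta_xstar:
  assumes A1: "assumption_A1 f Df Hf \<mu> L" and b: "b \<in> prob_simplex"
  shows "gbeta Df b (xstar f b) = 0"
  by (rule gradient_eq_0_if_minimum[OF fbeta_has_derivative xstar_minimum[OF A1 b]])
    (rule assumption_A1D(3)[OF A1])

lemma xstar_in_pareto_set:
  assumes A1: "assumption_A1 f Df Hf \<mu> L" and b: "b \<in> prob_simplex"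
  shows "xstar f b \<in> pareto_set f"
proof -
  have False if dominates: "\<forall>i. f i y \<le> f i (xstar f b)" and strict: "f j y < f j (xstar f b)" for y j
  proof -
    have "fbeta f b y \<le> fbeta f b (xstar f b)"
      unfolding fbeta_def using dominates by (intro sum_mono mult_left_mono prob_simplexD[OF b]) auto
    then have "\<forall>z. fbeta f b y \<le> fbeta f b z"
      using xstar_minimum[OF A1 b] order_trans by blast
    then have "xstar f b = y"
      by (rule xstar_unique[OF A1 b])
    then show False
      using strict by simp
  qed
  then show ?thesis
    unfolding pareto_set_def by blast
qed

lemma pareto_set_bounded:
  assumes A1: "assumption_A1 f Df Hf \<mu> L"
  shows "bounded (pareto_set f)"
proof -
  define r where "r = (\<Sum>i\<in>UNIV. 2 * norm (Df i 0) / \<mu>)"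
  have "norm x \<le> r" if x: "x \<in> pareto_set f" for x
  proof (rule ccontr)
    assume "\<not> norm x \<le> r"
    have "f i 0 < f i x" for i
    proof (rule strongly_convex_less_if_far[where F = "f i" and g = "Df i 0"])
      show "f i 0 + Df i 0 \<bullet> (x - 0) + \<mu> / 2 * (norm (x - 0))\<^sup>2 \<le> f i x"
        by (rule objective_strongly_convex[OF A1])
      have "2 * norm (Df i 0) / \<mu> \<le> r"
        unfolding r_def by (rule member_le_sum) (use assumption_A1D(1)[OF A1] in auto)
      then show "2 * norm (Df i 0) / \<mu> < norm (x - 0)"
        using \<open>\<not> norm x \<le> r\<close> by simp
    qed (rule assumption_A1D(1)[OF A1])
    then have "(\<forall>i. f i 0 \<le> f i x) \<and> (\<exists>i. f i 0 < f i x)"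
      by (blast intro: less_imp_le)
    then show False
      using x unfolding pareto_set_def by blast
  qed
  then show ?thesis
    unfolding bounded_iff by blast
qed

lemma Rdiam_nonneg: "assumption_A1 f Df Hf \<mu> L \<Longrightarrow> 0 \<le> Rdiam f"
  unfolding Rdiam_def by (rule diameter_ge_0[OF pareto_set_bounded])

lemma norm_gradient_at_xstar_le:
  assumes A1: "assumption_A1 f Df Hf \<mu> L" and b: "b \<in> prob_simplex"
  shows "norm (Df i (xstar f b)) \<le> L * Rdiam f"
proof -
  define xi where "xi = xstar f (axis i 1)"
  have "Df i xi = 0"
    using gbeta_xstar[OF A1 axis_in_prob_simplex] by (simp add: xi_def gbeta_axis)
  then have "norm (Df i (xstar f b)) = norm (Df i (xstar f b) - Df i xi)"
    by simp
  also have "\<dots> \<le> L * norm (xstar f b - xi)"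
    by (rule objective_gradient_lipschitz[OF A1])
  also have "\<dots> \<le> L * Rdiam f"
    using diameter_bounded_bound[OF pareto_set_bounded[OF A1] xstar_in_pareto_set[OF A1 b]
        xstar_in_pareto_set[OF A1 axis_in_prob_simplex]] assumption_A1D(1,2)[OF A1]
    by (simp add: Rdiam_def xi_def dist_norm)
  finally show ?thesis .
qed

lemma norm_sub_xstar_le:
  assumes A1: "assumption_A1 f Df Hf \<mu> L" and b: "b \<in> prob_simplex"
  shows "\<mu> * norm (x - xstar f b) \<le> norm (gbeta Df b x)"
proof -
  define \<delta> where "\<delta> = norm (x - xstar f b)"
  have "\<mu> * \<delta>\<^sup>2 \<le> (gbeta Df b x - gbeta Df b (xstar f b)) \<bullet> (x - xstar f b)"
    unfolding \<delta>_def by (rule strongly_convex_gradient_monotone[OF fbeta_strongly_convex[OF A1 b]])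
  also have "\<dots> \<le> norm (gbeta Df b x) * \<delta>"
    using norm_cauchy_schwarz by (simp add: gbeta_xstar[OF A1 b] \<delta>_def)
  finally have "(\<mu> * \<delta>) * \<delta> \<le> norm (gbeta Df b x) * \<delta>"
    by (simp add: power2_eq_square mult.assoc)
  then show ?thesis
    unfolding \<delta>_def[symmetric] by (cases "\<delta> = 0") (simp_all add: \<delta>_def)
qed

section \<open>Hypergradient estimates\<close>

lemma jacF_transpose_mult: "transpose (jacF Df x) *v v = (\<Sum>i\<in>UNIV. v $ i *\<^sub>R Df i x)"
  by (simp add: jacF_def vector_matrix_mult_def vec_eq_iff sum_component)

lemma hat_grad_xstar_mult:
  "hat_grad_xstar Df Hf x b *v v = - (matrix_inv (Hbeta Hf b x) *v (\<Sum>i\<in>UNIV. v $ i *\<^sub>R Df i x))"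
  using jacF_transpose_mult[of Df x v]
  by (simp add: hat_grad_xstar_def matrix_vector_mult_uminus_left matrix_vector_mul_assoc[symmetric])

lemma norm_grad_xstar_mult_le:
  assumes A1: "assumption_A1 f Df Hf \<mu> L" and b: "b \<in> prob_simplex"
  shows "norm (grad_xstar f Df Hf b *v v) \<le> M0 f \<mu> L * l1norm v"
proof -
  have \<mu>: "0 < \<mu>"
    by (rule assumption_A1D(1)[OF A1])
  have "norm (grad_xstar f Df Hf b *v v) \<le> norm (\<Sum>i\<in>UNIV. v $ i *\<^sub>R Df i (xstar f b)) / \<mu>"
    unfolding grad_xstar_def hat_grad_xstar_mult norm_minus_cancel
    by (rule norm_matrix_inv_mult_le[OF Hbeta_coercive[OF A1 b] \<mu>])
  also have "\<dots> \<le> l1norm v * (L * Rdiam f) / \<mu>"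
    by (intro divide_right_mono norm_sum_scaleR_le_l1norm norm_gradient_at_xstar_le[OF A1 b])
      (use \<mu> in simp)
  finally show ?thesis
    by (simp add: M0_def algebra_simps)
qed

lemma norm_Hbeta_diff_mult_le:
  fixes Hf :: "'n::finite \<Rightarrow> real^'d::finite \<Rightarrow> real^'d^'d"
  assumes A2: "assumption_A2 Hf LH" and b: "b \<in> prob_simplex"
  shows "norm ((Hbeta Hf b x - Hbeta Hf b y) *v u) \<le> LH * norm (x - y) * norm u"
proof -
  have "(Hbeta Hf b x - Hbeta Hf b y) *v u = (\<Sum>i\<in>UNIV. b $ i *\<^sub>R ((Hf i x - Hf i y) *v u))"
    by (simp add: matrix_vector_mult_diff_rdistrib Hbeta_mult sum_subtractf scaleR_diff_right)
  also have "norm \<dots> \<le> l1norm b * (LH * norm (x - y) * norm u)"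
  proof (rule norm_sum_scaleR_le_l1norm)
    fix i
    have "norm ((Hf i x - Hf i y) *v u) \<le> onorm (\<lambda>v. (Hf i x - Hf i y) *v v) * norm u"
      by (rule onorm) (rule matrix_vector_mul_bounded_linear)
    also have "\<dots> \<le> LH * norm (x - y) * norm u"
      using A2 unfolding assumption_A2_def by (intro mult_right_mono) auto
    finally show "norm ((Hf i x - Hf i y) *v u) \<le> LH * norm (x - y) * norm u" .
  qed
  finally show ?thesis
    by (simp add: l1norm_prob_simplex[OF b])
qed

lemma norm_hat_grad_xstar_mult_diff_le:
  assumes A1: "assumption_A1 f Df Hf \<mu> L" and A2: "assumption_A2 Hf LH" and b: "b \<in> prob_simplex"
  shows "\<mu> * norm (hat_grad_xstar Df Hf y b *v v - hat_grad_xstar Df Hf x b *v v)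
    \<le> (LH * norm (hat_grad_xstar Df Hf y b *v v) + L * l1norm v) * norm (x - y)"
proof -
  define wx wy where "wx = (\<Sum>i\<in>UNIV. v $ i *\<^sub>R Df i x)" and "wy = (\<Sum>i\<in>UNIV. v $ i *\<^sub>R Df i y)"
  define Hx Hy where "Hx = Hbeta Hf b x" and "Hy = Hbeta Hf b y"
  have hat_y: "hat_grad_xstar Df Hf y b *v v = - (matrix_inv Hy *v wy)"
    and hat_x: "hat_grad_xstar Df Hf x b *v v = - (matrix_inv Hx *v wx)"
    by (simp_all add: hat_grad_xstar_mult Hx_def Hy_def wx_def wy_def)
  have "\<mu> * norm (hat_grad_xstar Df Hf y b *v v - hat_grad_xstar Df Hf x b *v v)
      = \<mu> * norm (matrix_inv Hy *v wy - matrix_inv Hx *v wx)"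
    unfolding hat_x hat_y by (simp add: norm_minus_commute)
  also have "\<dots> \<le> norm ((Hx - Hy) *v (matrix_inv Hy *v wy)) + norm (wy - wx)"
    unfolding Hx_def Hy_def
    by (rule norm_matrix_inv_mult_diff_le[OF Hbeta_coercive[OF A1 b] Hbeta_coercive[OF A1 b]
          assumption_A1D(1)[OF A1]])
  also have "\<dots> \<le> LH * norm (x - y) * norm (hat_grad_xstar Df Hf y b *v v) + l1norm v * (L * norm (x - y))"
  proof (rule add_mono)
    show "norm ((Hx - Hy) *v (matrix_inv Hy *v wy)) \<le> LH * norm (x - y) * norm (hat_grad_xstar Df Hf y b *v v)"
      unfolding hat_y norm_minus_cancel Hx_def Hy_def by (rule norm_Hbeta_diff_mult_le[OF A2 b])
    have "wy - wx = (\<Sum>i\<in>UNIV. v $ i *\<^sub>R (Df i y - Df i x))"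
      by (simp add: wx_def wy_def sum_subtractf scaleR_diff_right)
    also have "norm \<dots> \<le> l1norm v * (L * norm (x - y))"
      by (rule norm_sum_scaleR_le_l1norm)
        (metis objective_gradient_lipschitz[OF A1] norm_minus_commute)
    finally show "norm (wy - wx) \<le> l1norm v * (L * norm (x - y))" .
  qed
  finally show ?thesis
    by (simp add: algebra_simps)
qed

lemma norm_grad_xstar_sub_hat_grad_xstar_le:
  assumes A1: "assumption_A1 f Df Hf \<mu> L" and A2: "assumption_A2 Hf LH" and b: "b \<in> prob_simplex"
  shows "norm (grad_xstar f Df Hf b *v v - hat_grad_xstar Df Hf x b *v v)
    \<le> L / \<mu> * (1 + LH * Rdiam f / \<mu>) * norm (x - xstar f b) * l1norm v"
proof -
  note \<mu> = assumption_A1D(1)[OF A1]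
  define p where "p = grad_xstar f Df Hf b *v v"
  define \<delta> where "\<delta> = norm (x - xstar f b)"
  have "\<mu> * norm (p - hat_grad_xstar Df Hf x b *v v) \<le> (LH * norm p + L * l1norm v) * \<delta>"
    using norm_hat_grad_xstar_mult_diff_le[OF A1 A2 b, of "xstar f b" v x]
    by (simp add: p_def \<delta>_def grad_xstar_def)
  also have "\<dots> \<le> (LH * (M0 f \<mu> L * l1norm v) + L * l1norm v) * \<delta>"
    using norm_grad_xstar_mult_le[OF A1 b, of v] assumption_A2_nonneg[OF A2]
    by (intro mult_right_mono add_right_mono mult_left_mono) (simp_all add: p_def \<delta>_def)
  also have "\<dots> = \<mu> * (L / \<mu> * (1 + LH * Rdiam f / \<mu>) * \<delta> * l1norm v)"
    using \<mu> by (simp add: M0_def field_simps)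
  finally show ?thesis
    using \<mu> unfolding p_def \<delta>_def by (rule mult_left_le_imp_le)
qed

lemma hypergradient_error_le:
  assumes A1: "assumption_A1 f Df Hf \<mu> L" and A2: "assumption_A2 Hf LH"
    and A3: "assumption_A3 f0 g0 L0" and b: "b \<in> prob_simplex" and R: "Rdiam f \<noteq> 0"
  shows "\<bar>g0 (xstar f b) \<bullet> (grad_xstar f Df Hf b *v v) - g0 x \<bullet> (hat_grad_xstar Df Hf x b *v v)\<bar>
    \<le> err_grad_f0 f Df g0 \<mu> L LH L0 x b * l1norm v"
proof -
  note \<mu> = assumption_A1D(1)[OF A1] and \<mu>L = assumption_A1D(2)[OF A1]
  define xb where "xb = xstar f b"
  define p q where "p = grad_xstar f Df Hf b *v v" and "q = hat_grad_xstar Df Hf x b *v v"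
  define \<delta> where "\<delta> = norm (x - xb)"
  define K where "K = L / \<mu> * (1 + LH * Rdiam f / \<mu>)"
  have "M1 f \<mu> L LH / (2 * M0 f \<mu> L) = K"
    using R \<mu> \<mu>L by (simp add: M1_def M0_def K_def field_simps power2_eq_square)
  then have err: "err_grad_f0 f Df g0 \<mu> L LH L0 x b
      = (K * norm (g0 x) + L0 * M0 f \<mu> L) * (norm (gbeta Df b x) / \<mu>)"
    by (simp add: err_grad_f0_def)
  have p: "norm p \<le> M0 f \<mu> L * l1norm v"
    unfolding p_def by (rule norm_grad_xstar_mult_le[OF A1 b])
  have pq: "norm (p - q) \<le> K * \<delta> * l1norm v"
    unfolding p_def q_def K_def \<delta>_def xb_def by (rule norm_grad_xstar_sub_hat_grad_xstar_le[OF A1 A2 b])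
  have g0: "norm (g0 xb - g0 x) \<le> L0 * \<delta>"
    using A3 norm_minus_commute[of x xb] unfolding assumption_A3_def \<delta>_def by metis
  have "\<bar>g0 xb \<bullet> p - g0 x \<bullet> q\<bar> = \<bar>(g0 xb - g0 x) \<bullet> p + g0 x \<bullet> (p - q)\<bar>"
    by (simp add: inner_diff_left inner_diff_right)
  also have "\<dots> \<le> norm (g0 xb - g0 x) * norm p + norm (g0 x) * norm (p - q)"
    by (rule order_trans[OF abs_triangle_ineq add_mono]) (rule Cauchy_Schwarz_ineq2)+
  also have "\<dots> \<le> L0 * \<delta> * (M0 f \<mu> L * l1norm v) + norm (g0 x) * (K * \<delta> * l1norm v)"
    using assumption_A3_nonneg[OF A3]
    by (intro add_mono[OF mult_mono[OF g0 p] mult_left_mono[OF pq]]) (simp_all add: \<delta>_def)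
  also have "\<dots> = (K * norm (g0 x) + L0 * M0 f \<mu> L) * \<delta> * l1norm v"
    by (simp add: algebra_simps)
  also have "\<dots> \<le> (K * norm (g0 x) + L0 * M0 f \<mu> L) * (norm (gbeta Df b x) / \<mu>) * l1norm v"
  proof (intro mult_right_mono[OF mult_left_mono] l1norm_nonneg)
    show "\<delta> \<le> norm (gbeta Df b x) / \<mu>"
      using norm_sub_xstar_le[OF A1 b, of x] \<mu> by (simp add: \<delta>_def xb_def field_simps)
    show "0 \<le> K * norm (g0 x) + L0 * M0 f \<mu> L"
      using \<mu> \<mu>L Rdiam_nonneg[OF A1] assumption_A2_nonneg[OF A2] assumption_A3_nonneg[OF A3]
      by (simp add: K_def M0_def)
  qed
  finally show ?thesis
    unfolding err xb_def p_def q_def .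
qed

theorem lemma5:
  fixes f :: "'n::finite \<Rightarrow> real^'d::finite \<Rightarrow> real"
    and Df :: "'n \<Rightarrow> real^'d \<Rightarrow> real^'d"
    and Hf :: "'n \<Rightarrow> real^'d \<Rightarrow> real^'d^'d"
    and f0 :: "real^'d \<Rightarrow> real" and g0 :: "real^'d \<Rightarrow> real^'d"
    and \<mu> L LH L0 \<epsilon>0 \<epsilon> \<alpha> :: real
    and xhat x :: "real^'d" and bhat :: "real^'n"
  assumes A1: "assumption_A1 f Df Hf \<mu> L"
    and A2: "assumption_A2 Hf LH"
    and A3: "assumption_A3 f0 g0 L0"
    and bhat: "bhat \<in> prob_simplex"
    and grad_small: "norm (gbeta Df bhat xhat) \<le> \<epsilon>"
    and alpha: "0 < \<alpha>" "\<alpha> < 1"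
    and cond1: "\<forall>b'\<in>prob_simplex. - (g0 x \<bullet> (hat_grad_xstar Df Hf x bhat *v (b' - bhat)))
                  \<le> \<alpha> * \<epsilon>0 * l1norm (b' - bhat)"
    and cond2: "err_grad_f0 f Df g0 \<mu> L LH L0 x bhat \<le> (1 - \<alpha>) * \<epsilon>0"
  shows "pref_stationary f Df Hf g0 \<epsilon>0 \<epsilon> xhat bhat"
proof -
  have "- (g0 (xstar f bhat) \<bullet> (grad_xstar f Df Hf bhat *v (b' - bhat))) \<le> \<epsilon>0 * l1norm (b' - bhat)"
    if b': "b' \<in> prob_simplex" for b'
  proof (cases "Rdiam f = 0")
    case True
    \<comment> \<open>here M1 / (2 * M0) is 0 / 0 = 0, so err vanishes while the estimate need not be exact;
      but the exact hypergradient vanishes as well\<close>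
    then have "grad_xstar f Df Hf bhat *v (b' - bhat) = 0"
      using norm_grad_xstar_mult_le[OF A1 bhat, of "b' - bhat"] by (simp add: M0_def)
    moreover have "0 \<le> \<epsilon>0"
      using cond2 alpha True by (simp add: err_grad_f0_def M0_def M1_def zero_le_mult_iff)
    ultimately show ?thesis
      by (simp add: l1norm_nonneg)
  next
    case False
    have "- (g0 (xstar f bhat) \<bullet> (grad_xstar f Df Hf bhat *v (b' - bhat)))
        \<le> - (g0 x \<bullet> (hat_grad_xstar Df Hf x bhat *v (b' - bhat)))
          + err_grad_f0 f Df g0 \<mu> L LH L0 x bhat * l1norm (b' - bhat)"
      using hypergradient_error_le[OF A1 A2 A3 bhat False, where x = x and v = "b' - bhat"] by linarith
    also have "\<dots> \<le> \<alpha> * \<epsilon>0 * l1norm (b' - bhat) + (1 - \<alpha>) * \<epsilon>0 * l1norm (b' - bhat)"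
      using cond1 b' mult_right_mono[OF cond2 l1norm_nonneg] by (intro add_mono) auto
    finally show ?thesis
      by (simp add: algebra_simps)
  qed
  then show ?thesis
    using grad_small unfolding pref_stationary_def by blast
qed

end
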